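(* The class of line-graphs of bipartite multigraphs is closed under the following two operations: (1) deletion of a flat edge; (2) addition of a new vertex whose neighborhood is a maximal clique of the graph.
   Context: The line-graph of a multigraph $B$ has the edges of $B$ as vertices, two being adjacent iff they share an endpoint in $B$. An edge of a graph is flat if it is contained in no triangle. *)

theory Defs
  imports Main
begin

definition simple_graph :: "'a set \<Rightarrow> ('a \<Rightarrow> 'a \<Rightarrow> bool) \<Rightarrow> bool" where
  "simple_graph V adj \<longleftrightarrow> finite V \<and>
     (\<forall>u v. adj u v \<longrightarrow> u \<in> V \<and> v \<in> V \<and> u \<noteq> v \<and> adj v u)"

text \<open>Finite bipartite multigraph with parts X, Y and edge set Ed (edges are
  abstract identifiers, so parallel edges are allowed); ends e = (x, y) gives the
  endpoint x in X and the endpoint y in Y.\<close>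
definition bipartite_multigraph ::
  "'b set \<Rightarrow> 'b set \<Rightarrow> 'e set \<Rightarrow> ('e \<Rightarrow> 'b \<times> 'b) \<Rightarrow> bool" where
  "bipartite_multigraph X Y Ed ends \<longleftrightarrow> finite X \<and> finite Y \<and> finite Ed \<and>
     X \<inter> Y = {} \<and> (\<forall>e\<in>Ed. fst (ends e) \<in> X \<and> snd (ends e) \<in> Y)"

definition line_adj :: "('e \<Rightarrow> 'b \<times> 'b) \<Rightarrow> 'e \<Rightarrow> 'e \<Rightarrow> bool" where
  "line_adj ends e f \<longleftrightarrow> e \<noteq> f \<and>
     ({fst (ends e), snd (ends e)} \<inter> {fst (ends f), snd (ends f)} \<noteq> {})"

definition line_graph_of_bipartite_multigraph :: "'a set \<Rightarrow> ('a \<Rightarrow> 'a \<Rightarrow> bool) \<Rightarrow> bool" where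
  "line_graph_of_bipartite_multigraph V adj \<longleftrightarrow> simple_graph V adj \<and>
     (\<exists>(X::nat set) Y (Ed::nat set) ends \<phi>. bipartite_multigraph X Y Ed ends \<and>
        bij_betw \<phi> V Ed \<and> (\<forall>u\<in>V. \<forall>v\<in>V. adj u v \<longleftrightarrow> line_adj ends (\<phi> u) (\<phi> v)))"

definition flat_edge :: "'a set \<Rightarrow> ('a \<Rightarrow> 'a \<Rightarrow> bool) \<Rightarrow> 'a \<Rightarrow> 'a \<Rightarrow> bool" where
  "flat_edge V adj u v \<longleftrightarrow> adj u v \<and> \<not> (\<exists>w\<in>V. adj u w \<and> adj v w)"

definition delete_edge :: "('a \<Rightarrow> 'a \<Rightarrow> bool) \<Rightarrow> 'a \<Rightarrow> 'a \<Rightarrow> 'a \<Rightarrow> 'a \<Rightarrow> bool" where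
  "delete_edge adj u v = (\<lambda>x y. adj x y \<and> {x, y} \<noteq> {u, v})"

definition clique :: "'a set \<Rightarrow> ('a \<Rightarrow> 'a \<Rightarrow> bool) \<Rightarrow> 'a set \<Rightarrow> bool" where
  "clique V adj K \<longleftrightarrow> K \<subseteq> V \<and> (\<forall>x\<in>K. \<forall>y\<in>K. x \<noteq> y \<longrightarrow> adj x y)"

definition maximal_clique :: "'a set \<Rightarrow> ('a \<Rightarrow> 'a \<Rightarrow> bool) \<Rightarrow> 'a set \<Rightarrow> bool" where
  "maximal_clique V adj K \<longleftrightarrow> clique V adj K \<and> (\<forall>K'. clique V adj K' \<and> K \<subseteq> K' \<longrightarrow> K' = K)"

definition add_vertex_adj :: "('a \<Rightarrow> 'a \<Rightarrow> bool) \<Rightarrow> 'a \<Rightarrow> 'a set \<Rightarrow> 'a \<Rightarrow> 'a \<Rightarrow> bool" where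
  "add_vertex_adj adj z K = (\<lambda>x y. adj x y \<or> (x = z \<and> y \<in> K) \<or> (y = z \<and> x \<in> K))"

end

(* A line graph of a bipartite multigraph is the same as a labelling of each vertex by a
   pair (left end, right end), two distinct vertices being adjacent iff they agree in some
   coordinate. To delete a flat edge uv, give u fresh labels in the coordinates it shares
   with v: by flatness no other vertex agrees with u in such a coordinate, so only the
   adjacency uv is lost. A maximal clique of a line graph is the set of all edges at one
   node of the multigraph, so the new vertex becomes a new edge from that node to a fresh
   node on the other side. *)

theory Submission
  imports Defs
begin

definition line_graph_labelling :: "'a set \<Rightarrow> ('a \<Rightarrow> 'a \<Rightarrow> bool) \<Rightarrow> ('a \<Rightarrow> nat \<times> nat) \<Rightarrow> bool" where
  "line_graph_labelling V adj ends \<longleftrightarrow>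
     (\<forall>u\<in>V. \<forall>v\<in>V. adj u v \<longleftrightarrow>
        u \<noteq> v \<and> (fst (ends u) = fst (ends v) \<or> snd (ends u) = snd (ends v)))"

lemma line_adj_bipartite_iff:
  assumes "bipartite_multigraph X Y Ed ends" "e \<in> Ed" "f \<in> Ed"
  shows "line_adj ends e f \<longleftrightarrow>
           e \<noteq> f \<and> (fst (ends e) = fst (ends f) \<or> snd (ends e) = snd (ends f))"
proof -
  have "fst (ends e) \<in> X" "snd (ends e) \<in> Y" "fst (ends f) \<in> X" "snd (ends f) \<in> Y" "X \<inter> Y = {}"
    using assms unfolding bipartite_multigraph_def by auto
  then have "fst (ends e) \<noteq> snd (ends f)" "snd (ends e) \<noteq> fst (ends f)"
    by auto
  then show ?thesis
    unfolding line_adj_def by auto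
qed

lemma line_graph_of_bipartite_multigraph_iff:
  "line_graph_of_bipartite_multigraph V adj \<longleftrightarrow>
     simple_graph V adj \<and> (\<exists>ends. line_graph_labelling V adj ends)"
proof
  assume "line_graph_of_bipartite_multigraph V adj"
  then obtain X Y Ed :: "nat set" and ends \<phi> where
    sg: "simple_graph V adj" and bm: "bipartite_multigraph X Y Ed ends" and
    bij: "bij_betw \<phi> V Ed" and
    adj: "\<forall>u\<in>V. \<forall>v\<in>V. adj u v \<longleftrightarrow> line_adj ends (\<phi> u) (\<phi> v)"
    unfolding line_graph_of_bipartite_multigraph_def by blast
  have "line_graph_labelling V adj (ends \<circ> \<phi>)"
    unfolding line_graph_labelling_def
  proof (intro ballI)
    fix u v assume "u \<in> V" "v \<in> V"
    moreover from this bij have "\<phi> u \<in> Ed" "\<phi> v \<in> Ed" "\<phi> u = \<phi> v \<longleftrightarrow> u = v"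
      by (auto simp: bij_betw_def inj_on_eq_iff)
    ultimately show "adj u v \<longleftrightarrow> u \<noteq> v \<and> (fst ((ends \<circ> \<phi>) u) = fst ((ends \<circ> \<phi>) v) \<or>
        snd ((ends \<circ> \<phi>) u) = snd ((ends \<circ> \<phi>) v))"
      using adj line_adj_bipartite_iff[OF bm] by simp
  qed
  with sg show "simple_graph V adj \<and> (\<exists>ends. line_graph_labelling V adj ends)" by blast
next
  assume "simple_graph V adj \<and> (\<exists>ends. line_graph_labelling V adj ends)"
  then obtain ends where sg: "simple_graph V adj" and L: "line_graph_labelling V adj ends"
    by blast
  then have "finite V"
    by (simp add: simple_graph_def)
  then obtain \<phi> where bij: "bij_betw \<phi> V {0..<card V}"
    using ex_bij_betw_finite_nat by blast
  \<comment> \<open>Doubling, and doubling plus one, keep the two parts disjoint.\<close>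
  define ends' where
    "ends' e = (2 * fst (ends (inv_into V \<phi> e)), 2 * snd (ends (inv_into V \<phi> e)) + 1)" for e
  define X where "X = (\<lambda>e. fst (ends' e)) ` {0..<card V}"
  define Y where "Y = (\<lambda>e. snd (ends' e)) ` {0..<card V}"
  have "X \<subseteq> {m. even m}" "Y \<subseteq> {m. odd m}"
    unfolding X_def Y_def ends'_def by auto
  then have "X \<inter> Y = {}"
    by blast
  then have bm: "bipartite_multigraph X Y {0..<card V} ends'"
    unfolding bipartite_multigraph_def X_def Y_def by auto
  have "adj u v \<longleftrightarrow> line_adj ends' (\<phi> u) (\<phi> v)" if "u \<in> V" "v \<in> V" for u v
  proof -
    have "\<phi> u \<in> {0..<card V}" "\<phi> v \<in> {0..<card V}" "\<phi> u = \<phi> v \<longleftrightarrow> u = v"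
      using that bij by (auto simp: bij_betw_def inj_on_eq_iff)
    moreover have "ends' (\<phi> u) = (2 * fst (ends u), 2 * snd (ends u) + 1)"
      "ends' (\<phi> v) = (2 * fst (ends v), 2 * snd (ends v) + 1)"
      using that bij by (simp_all add: ends'_def bij_betw_inv_into_left)
    ultimately show ?thesis
      using L that line_adj_bipartite_iff[OF bm] unfolding line_graph_labelling_def by auto
  qed
  with sg bm bij show "line_graph_of_bipartite_multigraph V adj"
    unfolding line_graph_of_bipartite_multigraph_def by blast
qed

lemma line_graph_labelling_swap:
  "line_graph_labelling V adj ends \<Longrightarrow> line_graph_labelling V adj (prod.swap \<circ> ends)"
  unfolding line_graph_labelling_def by auto

lemma simple_graph_delete_edge:
  "simple_graph V adj \<Longrightarrow> simple_graph V (delete_edge adj u v)"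
  unfolding simple_graph_def delete_edge_def by (auto simp: insert_commute)

lemma simple_graph_add_vertex:
  "simple_graph V adj \<Longrightarrow> K \<subseteq> V \<Longrightarrow> z \<notin> V \<Longrightarrow>
     simple_graph (insert z V) (add_vertex_adj adj z K)"
  unfolding simple_graph_def add_vertex_adj_def by auto

lemma line_graph_labelling_delete_flat_edge:
  assumes sg: "simple_graph V adj" and L: "line_graph_labelling V adj ends"
    and flat: "flat_edge V adj u v"
  shows "\<exists>ends'. line_graph_labelling V (delete_edge adj u v) ends'"
proof -
  have "adj u v" and no_common: "\<And>w. w \<in> V \<Longrightarrow> \<not> (adj u w \<and> adj v w)"
    using flat unfolding flat_edge_def by auto
  then have "u \<in> V" "v \<in> V" "u \<noteq> v"
    using sg unfolding simple_graph_def by auto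
  from sg have "finite V"
    by (simp add: simple_graph_def)
  then obtain a b where a: "a \<notin> fst ` ends ` V" and b: "b \<notin> snd ` ends ` V"
    by (meson ex_new_if_finite finite_imageI infinite_UNIV_nat)
  define ends' where "ends' = ends(u :=
    (if fst (ends u) = fst (ends v) then a else fst (ends u),
     if snd (ends u) = snd (ends v) then b else snd (ends u)))"
  have shares_u: "fst (ends' u) = fst (ends' w) \<or> snd (ends' u) = snd (ends' w) \<longleftrightarrow> adj u w \<and> w \<noteq> v"
    if "w \<in> V" "w \<noteq> u" for w
  proof (cases "w = v")
    case True
    then show ?thesis
      using a b \<open>v \<in> V\<close> \<open>u \<noteq> v\<close> by (auto simp: ends'_def)
  next
    case False
    have "fst (ends u) = fst (ends v) \<Longrightarrow> fst (ends w) \<noteq> fst (ends u)"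
      "snd (ends u) = snd (ends v) \<Longrightarrow> snd (ends w) \<noteq> snd (ends u)"
      using no_common[OF \<open>w \<in> V\<close>] L that False \<open>u \<in> V\<close> \<open>v \<in> V\<close>
      unfolding line_graph_labelling_def by metis+
    then show ?thesis
      using a b L that False \<open>u \<in> V\<close> unfolding line_graph_labelling_def ends'_def by auto
  qed
  have "line_graph_labelling V (delete_edge adj u v) ends'"
    unfolding line_graph_labelling_def
  proof (intro ballI)
    fix x y assume "x \<in> V" "y \<in> V"
    then consider "x \<noteq> u" "y \<noteq> u" | "x = u" | "y = u"
      by blast
    then show "delete_edge adj u v x y \<longleftrightarrow>
        x \<noteq> y \<and> (fst (ends' x) = fst (ends' y) \<or> snd (ends' x) = snd (ends' y))"
    proof cases
      case 1
      then show ?thesis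
        using L \<open>x \<in> V\<close> \<open>y \<in> V\<close> unfolding line_graph_labelling_def delete_edge_def ends'_def
        by auto
    next
      case 2
      then show ?thesis
        using shares_u[OF \<open>y \<in> V\<close>] sg unfolding delete_edge_def simple_graph_def
        by (auto simp: doubleton_eq_iff)
    next
      case 3
      then show ?thesis
        using shares_u[OF \<open>x \<in> V\<close>] sg unfolding delete_edge_def simple_graph_def
        by (auto simp: doubleton_eq_iff)
    qed
  qed
  then show ?thesis by blast
qed

lemma line_graph_labelling_clique_common_end:
  assumes L: "line_graph_labelling V adj ends" and K: "clique V adj K" and "u \<in> K"
  shows "(\<forall>w\<in>K. fst (ends w) = fst (ends u)) \<or> (\<forall>w\<in>K. snd (ends w) = snd (ends u))"
proof (rule ccontr)
  have shares: "fst (ends p) = fst (ends q) \<or> snd (ends p) = snd (ends q)"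
    if "p \<in> K" "q \<in> K" for p q
  proof (cases "p = q")
    case False
    with K that have "adj p q"
      unfolding clique_def by blast
    with L K that show ?thesis
      unfolding line_graph_labelling_def clique_def by blast
  qed simp
  assume "\<not> ?thesis"
  then obtain w1 w2 where w1: "w1 \<in> K" "fst (ends w1) \<noteq> fst (ends u)"
    and w2: "w2 \<in> K" "snd (ends w2) \<noteq> snd (ends u)"
    by blast
  have "snd (ends w1) = snd (ends u)" "fst (ends w2) = fst (ends u)"
    using shares[OF w1(1) \<open>u \<in> K\<close>] shares[OF w2(1) \<open>u \<in> K\<close>] w1 w2 by auto
  then show False
    using shares[OF w1(1) w2(1)] w1 w2 by auto
qed

lemma line_graph_labelling_fst_class_clique:
  "line_graph_labelling V adj ends \<Longrightarrow> clique V adj {w \<in> V. fst (ends w) = x}"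
  unfolding line_graph_labelling_def clique_def by auto

lemma line_graph_labelling_maximal_clique:
  assumes L: "line_graph_labelling V adj ends" and K: "maximal_clique V adj K"
  shows "(\<exists>x. K = {w \<in> V. fst (ends w) = x}) \<or> (\<exists>y. K = {w \<in> V. snd (ends w) = y})"
proof (cases "K = {}")
  case True
  have "V = {}"
  proof (rule ccontr)
    assume "V \<noteq> {}"
    then obtain w where "w \<in> V"
      by blast
    then have "clique V adj {w}"
      unfolding clique_def by simp
    then show False
      using K True unfolding maximal_clique_def by blast
  qed
  with True show ?thesis
    by simp
next
  case False
  then obtain u where "u \<in> K"
    by blast
  have maximal: "K = C" if "clique V adj C" "K \<subseteq> C" for C
    using K that unfolding maximal_clique_def by blast
  have "K \<subseteq> V"
    using K unfolding maximal_clique_def clique_def by blast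
  from line_graph_labelling_clique_common_end[OF L _ \<open>u \<in> K\<close>] K
  consider "\<forall>w\<in>K. fst (ends w) = fst (ends u)" | "\<forall>w\<in>K. snd (ends w) = snd (ends u)"
    unfolding maximal_clique_def by blast
  then show ?thesis
  proof cases
    case 1
    have "clique V adj {w \<in> V. fst (ends w) = fst (ends u)}"
      using line_graph_labelling_fst_class_clique[OF L] .
    with 1 have "K = {w \<in> V. fst (ends w) = fst (ends u)}"
      using maximal \<open>K \<subseteq> V\<close> by blast
    then show ?thesis
      by blast
  next
    case 2
    have "clique V adj {w \<in> V. snd (ends w) = snd (ends u)}"
      using line_graph_labelling_fst_class_clique[OF line_graph_labelling_swap[OF L]] by simp
    with 2 have "K = {w \<in> V. snd (ends w) = snd (ends u)}"
      using maximal \<open>K \<subseteq> V\<close> by blast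
    then show ?thesis
      by blast
  qed
qed

lemma line_graph_labelling_add_vertex:
  assumes sg: "simple_graph V adj" and L: "line_graph_labelling V adj ends"
    and "z \<notin> V" and K: "K = {w \<in> V. fst (ends w) = x}"
  shows "\<exists>ends'. line_graph_labelling (insert z V) (add_vertex_adj adj z K) ends'"
proof -
  from sg have "finite V"
    by (simp add: simple_graph_def)
  then obtain b where b: "b \<notin> snd ` ends ` V"
    by (meson ex_new_if_finite finite_imageI infinite_UNIV_nat)
  have "\<not> adj z w" "\<not> adj w z" for w
    using sg \<open>z \<notin> V\<close> unfolding simple_graph_def by auto
  then have "line_graph_labelling (insert z V) (add_vertex_adj adj z K) (ends(z := (x, b)))"
    using L K b \<open>z \<notin> V\<close> unfolding line_graph_labelling_def add_vertex_adj_def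
    by (auto simp: image_iff)
  then show ?thesis
    by blast
qed

lemma line_graph_of_bipartite_multigraph_delete_flat_edge:
  assumes "line_graph_of_bipartite_multigraph V adj" and "flat_edge V adj u v"
  shows "line_graph_of_bipartite_multigraph V (delete_edge adj u v)"
proof -
  obtain ends where sg: "simple_graph V adj" and L: "line_graph_labelling V adj ends"
    using assms(1) unfolding line_graph_of_bipartite_multigraph_iff by blast
  show ?thesis
    unfolding line_graph_of_bipartite_multigraph_iff
    using simple_graph_delete_edge[OF sg] line_graph_labelling_delete_flat_edge[OF sg L assms(2)]
    by blast
qed

lemma line_graph_of_bipartite_multigraph_add_vertex:
  assumes G: "line_graph_of_bipartite_multigraph V adj"
    and "z \<notin> V" and K: "maximal_clique V adj K"
  shows "line_graph_of_bipartite_multigraph (insert z V) (add_vertex_adj adj z K)"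
proof -
  obtain ends where sg: "simple_graph V adj" and L: "line_graph_labelling V adj ends"
    using G unfolding line_graph_of_bipartite_multigraph_iff by blast
  have "K \<subseteq> V"
    using K unfolding maximal_clique_def clique_def by blast
  from line_graph_labelling_maximal_clique[OF L K]
  have "\<exists>ends'. line_graph_labelling (insert z V) (add_vertex_adj adj z K) ends'"
  proof (elim disjE exE)
    fix x assume "K = {w \<in> V. fst (ends w) = x}"
    then show ?thesis
      using line_graph_labelling_add_vertex[OF sg L \<open>z \<notin> V\<close>] by blast
  next
    fix y assume "K = {w \<in> V. snd (ends w) = y}"
    then have "K = {w \<in> V. fst ((prod.swap \<circ> ends) w) = y}"
      by simp
    then show ?thesis
      using line_graph_labelling_add_vertex[OF sg line_graph_labelling_swap[OF L] \<open>z \<notin> V\<close>]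
      by blast
  qed
  with simple_graph_add_vertex[OF sg \<open>K \<subseteq> V\<close> \<open>z \<notin> V\<close>] show ?thesis
    unfolding line_graph_of_bipartite_multigraph_iff by blast
qed

theorem lemma5:
  fixes V :: "'a set" and adj :: "'a \<Rightarrow> 'a \<Rightarrow> bool"
  assumes "line_graph_of_bipartite_multigraph V adj"
  shows "(\<forall>u v. flat_edge V adj u v \<longrightarrow>
            line_graph_of_bipartite_multigraph V (delete_edge adj u v))
       \<and> (\<forall>z K. z \<notin> V \<and> maximal_clique V adj K \<longrightarrow>
            line_graph_of_bipartite_multigraph (insert z V) (add_vertex_adj adj z K))"
  using line_graph_of_bipartite_multigraph_delete_flat_edge[OF assms]
    line_graph_of_bipartite_multigraph_add_vertex[OF assms]
  by simp

end
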